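(* Let $X\subseteq \mathbb{P}^1\times\mathbb{P}^1\times\mathbb{P}^1$ be a variety of lines such that, for each $h=1,2,3$, $U_h(X)$ resembles a Ferrers diagram. Then $X$ has the $Hyp_4(\star)$-property if and only if for all $a_1,a_2\in[d_1]$, $b_1,b_2\in[d_2]$, $c_1,c_2\in[d_3]$ the following three conditions hold: (1) either $(\mu_{a_1b_1c_1},\mu_{a_2b_1c_1})\neq(1,1)$ or $(\mu_{a_1b_10},\mu_{a_2b_10})\neq(1,0)$; (2) either $(\mu_{a_1b_1c_1},\mu_{a_1b_1c_2})\neq(1,1)$ or $(\mu_{a_10c_1},\mu_{a_10c_2})\neq(1,0)$; (3) either $(\mu_{a_1b_1c_1},\mu_{a_1b_2c_1})\neq(1,1)$ or $(\mu_{0b_1c_1},\mu_{0b_2c_1})\neq(1,0)$.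
   Context: $R=K[x_{1,0},x_{1,1},x_{2,0},x_{2,1},x_{3,0},x_{3,1}]$ ($K$ algebraically closed, characteristic zero) trigraded by $\deg x_{i,j}=\mathbf e_i$, coordinate ring of $\mathbb{P}^1\times\mathbb{P}^1\times\mathbb{P}^1$. A variety of lines is written $X= \bigcup_{(i,j)\in U_3(X)} \mathcal{L}(A_i,B_j)\cup\bigcup_{(i,k)\in U_2(X)} \mathcal{L}(A_i,C_k)\cup \bigcup_{(j,k)\in U_1(X)} \mathcal{L}(B_j,C_k)$, where $\mathcal L(A_1),\ldots,\mathcal L(A_{d_1})$, $\mathcal L(B_1),\ldots,\mathcal L(B_{d_2})$, $\mathcal L(C_1),\ldots,\mathcal L(C_{d_3})$ are the distinct hyperplanes containing some line of $X$, defined by linear forms of degrees $(1,0,0),(0,1,0),(0,0,1)$ respectively, $\mathcal L(F,G)$ is the line defined by $(F,G)$, $U_3(X)\subseteq[d_1]\times[d_2]$, $U_2(X)\subseteq[d_1]\times[d_3]$, $U_1(X)\subseteq[d_2]\times[d_3]$, $[n]=\{1,\dots,n\}$. $U_h(X)$ resembles a Ferrers diagram if after permuting each of its two index sets it becomes a set $U$ with: $(u,v)\in U\Rightarrow (u',v')\in U$ for all $1\le u'\le u$, $1\le v'\le v$. For $P_{ijk}=\mathcal L(A_i)\cap\mathcal L(B_j)\cap\mathcal L(C_k)$, $\mu_{ijk}$ is the number of lines of $X$ through $P_{ijk}$. Moreover $\mu_{ij0}=1$ if $\mathcal L(A_i,B_j)\in X$ and $0$ otherwise; $\mu_{i0k}=1$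 if $\mathcal L(A_i,C_k)\in X$ and $0$ otherwise; $\mu_{0jk}=1$ if $\mathcal L(B_j,C_k)\in X$ and $0$ otherwise. $X$ has the $Hyp_4(\star)$-property if for any $4$ hyperplanes $H_1,\ldots,H_4$ (each defined by a linear form of degree some $\mathbf e_i$) such that $\mathcal{L}(H_i,H_j)$ is a line of $X$ for all $j\neq i-1,i,i+1$ (indices modulo $4$), there is $u$ with $\mathcal{L}(H_u,H_{u+1})$ a line of $X$. *)

theory Defs
  imports Main
begin

text \<open>A hyperplane defined by a linear form of degree e_1, e_2, e_3 is encoded by
  HypA n, HypB n, HypC n respectively.  For 1 <= n <= d_h these are the
  hyperplanes L(A_n), L(B_n), L(C_n) containing lines of X; all other indices
  encode the (infinitely many) remaining hyperplanes of that degree, which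
  contain no line of X.  Distinct codes are distinct hyperplanes.\<close>

datatype hyp = HypA nat | HypB nat | HypC nat

definition variety_of_lines ::
  "nat \<Rightarrow> nat \<Rightarrow> nat \<Rightarrow> (nat \<times> nat) set \<Rightarrow> (nat \<times> nat) set \<Rightarrow> (nat \<times> nat) set \<Rightarrow> bool" where
  "variety_of_lines d1 d2 d3 U1 U2 U3 \<longleftrightarrow>
     U3 \<subseteq> {1..d1} \<times> {1..d2} \<and> U2 \<subseteq> {1..d1} \<times> {1..d3} \<and> U1 \<subseteq> {1..d2} \<times> {1..d3} \<and>
     (\<forall>i\<in>{1..d1}. (\<exists>j. (i,j) \<in> U3) \<or> (\<exists>k. (i,k) \<in> U2)) \<and>
     (\<forall>j\<in>{1..d2}. (\<exists>i. (i,j) \<in> U3) \<or> (\<exists>k. (j,k) \<in> U1)) \<and>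
     (\<forall>k\<in>{1..d3}. (\<exists>i. (i,k) \<in> U2) \<or> (\<exists>j. (j,k) \<in> U1))"

text \<open>The lines of X, each line L(F,G) encoded by the set {F,G} of its two defining hyperplanes.\<close>
definition lines_of :: "(nat \<times> nat) set \<Rightarrow> (nat \<times> nat) set \<Rightarrow> (nat \<times> nat) set \<Rightarrow> hyp set set" where
  "lines_of U1 U2 U3 =
     {{HypA i, HypB j} | i j. (i,j) \<in> U3} \<union>
     {{HypA i, HypC k} | i k. (i,k) \<in> U2} \<union>
     {{HypB j, HypC k} | j k. (j,k) \<in> U1}"

definition is_line_of :: "(nat \<times> nat) set \<Rightarrow> (nat \<times> nat) set \<Rightarrow> (nat \<times> nat) set \<Rightarrow> hyp \<Rightarrow> hyp \<Rightarrow> bool" where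
  "is_line_of U1 U2 U3 H H' \<longleftrightarrow> {H, H'} \<in> lines_of U1 U2 U3"

text \<open>mu i j k: for i,j,k >= 1 the number of lines of X through
  P_ijk = L(A_i) \<inter> L(B_j) \<inter> L(C_k) (a line L(F,G) passes through P_ijk iff
  F and G are among A_i, B_j, C_k); an index 0 gives the indicator of the
  line determined by the two other indices.\<close>
definition mu :: "(nat \<times> nat) set \<Rightarrow> (nat \<times> nat) set \<Rightarrow> (nat \<times> nat) set \<Rightarrow> nat \<Rightarrow> nat \<Rightarrow> nat \<Rightarrow> nat" where
  "mu U1 U2 U3 i j k =
    (if i = 0 then (if (j,k) \<in> U1 then 1 else 0)
     else if j = 0 then (if (i,k) \<in> U2 then 1 else 0)
     else if k = 0 then (if (i,j) \<in> U3 then 1 else 0)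
     else card {l \<in> lines_of U1 U2 U3. l \<subseteq> {HypA i, HypB j, HypC k}})"

definition resembles_ferrers :: "(nat \<times> nat) set \<Rightarrow> nat \<Rightarrow> nat \<Rightarrow> bool" where
  "resembles_ferrers U m n \<longleftrightarrow>
     (\<exists>\<sigma> \<tau>. bij_betw \<sigma> {1..m} {1..m} \<and> bij_betw \<tau> {1..n} {1..n} \<and>
        (let V = (\<lambda>(a,b). (\<sigma> a, \<tau> b)) ` U in
          \<forall>u v. (u,v) \<in> V \<longrightarrow> (\<forall>u' v'. 1 \<le> u' \<and> u' \<le> u \<and> 1 \<le> v' \<and> v' \<le> v \<longrightarrow> (u',v') \<in> V)))"

definition hyp4_star :: "(nat \<times> nat) set \<Rightarrow> (nat \<times> nat) set \<Rightarrow> (nat \<times> nat) set \<Rightarrow> bool" where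
  "hyp4_star U1 U2 U3 \<longleftrightarrow>
     (\<forall>H :: nat \<Rightarrow> hyp.
        (\<forall>i<4. \<forall>j<4. j \<noteq> (i + 3) mod 4 \<and> j \<noteq> i \<and> j \<noteq> (i + 1) mod 4 \<longrightarrow>
            is_line_of U1 U2 U3 (H i) (H j)) \<longrightarrow>
        (\<exists>u<4. is_line_of U1 U2 U3 (H u) (H ((u + 1) mod 4))))"

end

theory Submission
  imports Defs
begin

text \<open>A set resembling a Ferrers diagram is a Ferrers relation: whenever (a,b) and (a',b')
  lie in it, so does (a,b') or (a',b). A quadrilateral violating Hyp_4(star) has two diagonals
  that are lines of X and four sides that are not. If both diagonals came from the same U_h,
  the two sides joining their endpoints would violate the Ferrers property; the remaining
  configurations are, up to the symmetries of the quadrilateral, three shapes. Counting the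
  lines through the points P_ijk, each shape is exactly a failure of one of the three
  conditions on the multiplicities mu.\<close>

definition ferrers_relation :: "('a \<times> 'b) set \<Rightarrow> bool" where
  "ferrers_relation R \<longleftrightarrow>
     (\<forall>a b a' b'. (a, b) \<in> R \<longrightarrow> (a', b') \<in> R \<longrightarrow> (a, b') \<in> R \<or> (a', b) \<in> R)"

lemma ferrers_relationD:
  "ferrers_relation R \<Longrightarrow> (a, b) \<in> R \<Longrightarrow> (a', b') \<in> R \<Longrightarrow> (a, b') \<in> R \<or> (a', b) \<in> R"
  unfolding ferrers_relation_def by blast

lemma ferrers_relation_vimage_map_prod:
  "ferrers_relation R \<Longrightarrow> ferrers_relation (map_prod f g -` R)"
  unfolding ferrers_relation_def by auto

lemma ferrers_relation_Int_Times:
  "ferrers_relation R \<Longrightarrow> ferrers_relation (R \<inter> A \<times> B)"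
  unfolding ferrers_relation_def by blast

lemma ferrers_relation_if_down_closed:
  fixes V :: "(nat \<times> nat) set"
  assumes pos: "V \<subseteq> {1..} \<times> {1..}"
    and down: "\<And>u v u' v'. (u, v) \<in> V \<Longrightarrow> 1 \<le> u' \<Longrightarrow> u' \<le> u \<Longrightarrow> 1 \<le> v' \<Longrightarrow> v' \<le> v \<Longrightarrow> (u', v') \<in> V"
  shows "ferrers_relation V"
  unfolding ferrers_relation_def
proof (intro allI impI)
  fix u v u' v'
  assume uv: "(u, v) \<in> V" and uv': "(u', v') \<in> V"
  with pos have "1 \<le> u" "1 \<le> u'" "1 \<le> v" "1 \<le> v'" by auto
  then show "(u, v') \<in> V \<or> (u', v) \<in> V"
    using down[OF uv] down[OF uv'] by (cases "u \<le> u'") auto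
qed

lemma resembles_ferrers_imp_ferrers_relation:
  assumes F: "resembles_ferrers U m n" and U: "U \<subseteq> {1..m} \<times> {1..n}"
  shows "ferrers_relation U"
proof -
  obtain \<sigma> \<tau> where \<sigma>: "bij_betw \<sigma> {1..m} {1..m}" and \<tau>: "bij_betw \<tau> {1..n} {1..n}"
    and down: "\<And>u v u' v'. (u, v) \<in> map_prod \<sigma> \<tau> ` U \<Longrightarrow> 1 \<le> u' \<Longrightarrow> u' \<le> u \<Longrightarrow> 1 \<le> v' \<Longrightarrow> v' \<le> v
                 \<Longrightarrow> (u', v') \<in> map_prod \<sigma> \<tau> ` U"
    using F unfolding resembles_ferrers_def Let_def map_prod_def by auto
  have inj: "inj_on (map_prod \<sigma> \<tau>) ({1..m} \<times> {1..n})"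
    using \<sigma> \<tau> by (simp add: map_prod_inj_on bij_betw_imp_inj_on)
  have "map_prod \<sigma> \<tau> ` U \<subseteq> {1..} \<times> {1..}"
    using U \<sigma> \<tau> by (auto dest!: bij_betw_apply)
  then have "ferrers_relation (map_prod \<sigma> \<tau> -` map_prod \<sigma> \<tau> ` U \<inter> {1..m} \<times> {1..n})"
    by (intro ferrers_relation_Int_Times ferrers_relation_vimage_map_prod
        ferrers_relation_if_down_closed[OF _ down])
  also have "map_prod \<sigma> \<tau> -` map_prod \<sigma> \<tau> ` U \<inter> {1..m} \<times> {1..n} = U"
  proof (intro equalityI subsetI)
    fix x
    assume "x \<in> map_prod \<sigma> \<tau> -` map_prod \<sigma> \<tau> ` U \<inter> {1..m} \<times> {1..n}"
    then have image: "map_prod \<sigma> \<tau> x \<in> map_prod \<sigma> \<tau> ` U" and box: "x \<in> {1..m} \<times> {1..n}"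
      by (simp_all only: Int_iff vimage_eq)
    show "x \<in> U"
      using image by (rule inj_on_image_mem_iff[OF inj box U, THEN iffD1])
  qed (use U in blast)
  finally show ?thesis .
qed

lemma is_line_of_simps [simp]:
  "is_line_of U1 U2 U3 (HypA i) (HypB j) \<longleftrightarrow> (i, j) \<in> U3"
  "is_line_of U1 U2 U3 (HypB j) (HypA i) \<longleftrightarrow> (i, j) \<in> U3"
  "is_line_of U1 U2 U3 (HypA i) (HypC k) \<longleftrightarrow> (i, k) \<in> U2"
  "is_line_of U1 U2 U3 (HypC k) (HypA i) \<longleftrightarrow> (i, k) \<in> U2"
  "is_line_of U1 U2 U3 (HypB j) (HypC k) \<longleftrightarrow> (j, k) \<in> U1"
  "is_line_of U1 U2 U3 (HypC k) (HypB j) \<longleftrightarrow> (j, k) \<in> U1"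
  "\<not> is_line_of U1 U2 U3 (HypA i) (HypA i')"
  "\<not> is_line_of U1 U2 U3 (HypB j) (HypB j')"
  "\<not> is_line_of U1 U2 U3 (HypC k) (HypC k')"
  by (auto simp: is_line_of_def lines_of_def doubleton_eq_iff)

lemma is_line_of_commute: "is_line_of U1 U2 U3 H H' \<longleftrightarrow> is_line_of U1 U2 U3 H' H"
  by (simp add: is_line_of_def insert_commute)

lemma lines_through_point_iff:
  "l \<in> lines_of U1 U2 U3 \<and> l \<subseteq> {HypA a, HypB b, HypC c} \<longleftrightarrow>
     l = {HypA a, HypB b} \<and> (a, b) \<in> U3 \<or> l = {HypA a, HypC c} \<and> (a, c) \<in> U2 \<or>
     l = {HypB b, HypC c} \<and> (b, c) \<in> U1"
  unfolding lines_of_def by blast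

lemma mu_eq_of_bool:
  assumes "a \<noteq> 0" "b \<noteq> 0" "c \<noteq> 0"
  shows "mu U1 U2 U3 a b c = of_bool ((a, b) \<in> U3) + of_bool ((a, c) \<in> U2) + of_bool ((b, c) \<in> U1)"
proof -
  have "{l \<in> lines_of U1 U2 U3. l \<subseteq> {HypA a, HypB b, HypC c}} =
     (if (a, b) \<in> U3 then {{HypA a, HypB b}} else {}) \<union> (if (a, c) \<in> U2 then {{HypA a, HypC c}} else {})
      \<union> (if (b, c) \<in> U1 then {{HypB b, HypC c}} else {})"
    using lines_through_point_iff by auto
  then show ?thesis
    using assms by (auto simp: mu_def doubleton_eq_iff card_insert_if)
qed

lemma mu_zero_eq_of_bool:
  "a \<noteq> 0 \<Longrightarrow> b \<noteq> 0 \<Longrightarrow> mu U1 U2 U3 a b 0 = of_bool ((a, b) \<in> U3)"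
  "a \<noteq> 0 \<Longrightarrow> mu U1 U2 U3 a 0 c = of_bool ((a, c) \<in> U2)"
  "mu U1 U2 U3 0 b c = of_bool ((b, c) \<in> U1)"
  by (simp_all add: mu_def)

lemma ex_less_4_iff: "(\<exists>u<4. P u) \<longleftrightarrow> P (0::nat) \<or> P 1 \<or> P 2 \<or> P 3"
  by (auto simp: less_Suc_eq numeral_eq_Suc)

definition bad_quadrilateral ::
  "(nat \<times> nat) set \<Rightarrow> (nat \<times> nat) set \<Rightarrow> (nat \<times> nat) set \<Rightarrow> hyp \<Rightarrow> hyp \<Rightarrow> hyp \<Rightarrow> hyp \<Rightarrow> bool" where
  "bad_quadrilateral U1 U2 U3 H0 H1 H2 H3 \<longleftrightarrow>
     is_line_of U1 U2 U3 H0 H2 \<and> is_line_of U1 U2 U3 H1 H3 \<and>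
     \<not> is_line_of U1 U2 U3 H0 H1 \<and> \<not> is_line_of U1 U2 U3 H1 H2 \<and>
     \<not> is_line_of U1 U2 U3 H2 H3 \<and> \<not> is_line_of U1 U2 U3 H3 H0"

lemma hyp4_star_iff_no_bad_quadrilateral:
  "hyp4_star U1 U2 U3 \<longleftrightarrow> (\<forall>H0 H1 H2 H3. \<not> bad_quadrilateral U1 U2 U3 H0 H1 H2 H3)"
proof
  assume hyp4: "hyp4_star U1 U2 U3"
  show "\<forall>H0 H1 H2 H3. \<not> bad_quadrilateral U1 U2 U3 H0 H1 H2 H3"
  proof (intro allI notI)
    fix H0 H1 H2 H3
    assume bad: "bad_quadrilateral U1 U2 U3 H0 H1 H2 H3"
    define H where "H = (\<lambda>n::nat. [H0, H1, H2, H3] ! n)"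
    have four: "i < 4 \<Longrightarrow> i = 0 \<or> i = 1 \<or> i = 2 \<or> i = 3" for i :: nat
      by arith
    have "is_line_of U1 U2 U3 (H i) (H j)"
      if "i < 4" "j < 4" "j \<noteq> (i + 3) mod 4 \<and> j \<noteq> i \<and> j \<noteq> (i + 1) mod 4" for i j
      using four[OF that(1)] four[OF that(2)] that(3) bad
      by (auto simp: H_def bad_quadrilateral_def is_line_of_commute)
    then obtain u where "u < 4" "is_line_of U1 U2 U3 (H u) (H ((u + 1) mod 4))"
      using hyp4 unfolding hyp4_star_def by blast
    with four[of u] bad show False
      by (auto simp: H_def bad_quadrilateral_def)
  qed
next
  assume no_bad: "\<forall>H0 H1 H2 H3. \<not> bad_quadrilateral U1 U2 U3 H0 H1 H2 H3"
  show "hyp4_star U1 U2 U3"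
    unfolding hyp4_star_def
  proof (intro allI impI)
    fix H :: "nat \<Rightarrow> hyp"
    assume "\<forall>i<4. \<forall>j<4. j \<noteq> (i + 3) mod 4 \<and> j \<noteq> i \<and> j \<noteq> (i + 1) mod 4 \<longrightarrow>
              is_line_of U1 U2 U3 (H i) (H j)"
    then have "is_line_of U1 U2 U3 (H 0) (H 2)" "is_line_of U1 U2 U3 (H 1) (H 3)"
      by auto
    moreover have "\<not> bad_quadrilateral U1 U2 U3 (H 0) (H 1) (H 2) (H 3)"
      using no_bad by blast
    ultimately have consecutive: "is_line_of U1 U2 U3 (H 0) (H 1) \<or> is_line_of U1 U2 U3 (H 1) (H 2) \<or>
        is_line_of U1 U2 U3 (H 2) (H 3) \<or> is_line_of U1 U2 U3 (H 3) (H 0)"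
      unfolding bad_quadrilateral_def by blast
    have succ_mod_4: "(0 + 1) mod 4 = (1::nat)" "(1 + 1) mod 4 = (2::nat)" "(2 + 1) mod 4 = (3::nat)"
      "(3 + 1) mod 4 = (0::nat)"
      by simp_all
    show "\<exists>u<4. is_line_of U1 U2 U3 (H u) (H ((u + 1) mod 4))"
      unfolding ex_less_4_iff succ_mod_4 by (fact consecutive)
  qed
qed

lemma bad_quadrilateral_shapes:
  assumes F1: "ferrers_relation U1" and F2: "ferrers_relation U2" and F3: "ferrers_relation U3"
    and bad: "bad_quadrilateral U1 U2 U3 H0 H1 H2 H3"
  shows "(\<exists>a1 a2 b1 c1. bad_quadrilateral U1 U2 U3 (HypA a1) (HypA a2) (HypB b1) (HypC c1))
    \<or> (\<exists>a1 b1 c1 c2. bad_quadrilateral U1 U2 U3 (HypC c1) (HypC c2) (HypA a1) (HypB b1))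
    \<or> (\<exists>a1 b1 b2 c1. bad_quadrilateral U1 U2 U3 (HypB b1) (HypB b2) (HypC c1) (HypA a1))"
  using bad unfolding bad_quadrilateral_def
  by (cases H0; cases H1; cases H2; cases H3)
    (simp_all, (blast | meson ferrers_relationD F1 F2 F3)+)

lemma bad_quadrilateral_in_ranges:
  assumes "variety_of_lines d1 d2 d3 U1 U2 U3"
  shows "bad_quadrilateral U1 U2 U3 (HypA a1) (HypA a2) (HypB b1) (HypC c1)
           \<Longrightarrow> a1 \<in> {1..d1} \<and> a2 \<in> {1..d1} \<and> b1 \<in> {1..d2} \<and> c1 \<in> {1..d3}"
    and "bad_quadrilateral U1 U2 U3 (HypC c1) (HypC c2) (HypA a1) (HypB b1)
           \<Longrightarrow> a1 \<in> {1..d1} \<and> b1 \<in> {1..d2} \<and> c1 \<in> {1..d3} \<and> c2 \<in> {1..d3}"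
    and "bad_quadrilateral U1 U2 U3 (HypB b1) (HypB b2) (HypC c1) (HypA a1)
           \<Longrightarrow> a1 \<in> {1..d1} \<and> b1 \<in> {1..d2} \<and> b2 \<in> {1..d2} \<and> c1 \<in> {1..d3}"
  using assms unfolding variety_of_lines_def bad_quadrilateral_def by auto

lemma no_bad_quadrilateral_iff_no_bad_shapes:
  assumes X: "variety_of_lines d1 d2 d3 U1 U2 U3"
    and F: "ferrers_relation U1" "ferrers_relation U2" "ferrers_relation U3"
  shows "(\<forall>H0 H1 H2 H3. \<not> bad_quadrilateral U1 U2 U3 H0 H1 H2 H3) \<longleftrightarrow>
    (\<forall>a1\<in>{1..d1}. \<forall>a2\<in>{1..d1}. \<forall>b1\<in>{1..d2}. \<forall>b2\<in>{1..d2}. \<forall>c1\<in>{1..d3}. \<forall>c2\<in>{1..d3}.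
       \<not> bad_quadrilateral U1 U2 U3 (HypA a1) (HypA a2) (HypB b1) (HypC c1) \<and>
       \<not> bad_quadrilateral U1 U2 U3 (HypC c1) (HypC c2) (HypA a1) (HypB b1) \<and>
       \<not> bad_quadrilateral U1 U2 U3 (HypB b1) (HypB b2) (HypC c1) (HypA a1))"
    (is "?no_bad \<longleftrightarrow> ?no_bad_shape")
proof
  assume ?no_bad
  then show ?no_bad_shape
    by blast
next
  assume no_bad_shape: ?no_bad_shape
  show ?no_bad
  proof (intro allI notI)
    fix H0 H1 H2 H3
    assume "bad_quadrilateral U1 U2 U3 H0 H1 H2 H3"
    from bad_quadrilateral_shapes[OF F this] show False
    proof (elim disjE exE)
      fix a1 a2 b1 c1
      assume bad: "bad_quadrilateral U1 U2 U3 (HypA a1) (HypA a2) (HypB b1) (HypC c1)"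
      with no_bad_shape bad_quadrilateral_in_ranges(1)[OF X bad] show False
        by blast
    next
      fix a1 b1 c1 c2
      assume bad: "bad_quadrilateral U1 U2 U3 (HypC c1) (HypC c2) (HypA a1) (HypB b1)"
      with no_bad_shape bad_quadrilateral_in_ranges(2)[OF X bad] show False
        by blast
    next
      fix a1 b1 b2 c1
      assume bad: "bad_quadrilateral U1 U2 U3 (HypB b1) (HypB b2) (HypC c1) (HypA a1)"
      with no_bad_shape bad_quadrilateral_in_ranges(3)[OF X bad] show False
        by blast
    qed
  qed
qed

lemma mu_conditions_iff_no_bad_shapes:
  assumes "a1 \<noteq> 0" "a2 \<noteq> 0" "b1 \<noteq> 0" "b2 \<noteq> 0" "c1 \<noteq> 0" "c2 \<noteq> 0"
  shows "((mu U1 U2 U3 a1 b1 c1, mu U1 U2 U3 a2 b1 c1) \<noteq> (1,1) \<or>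
           (mu U1 U2 U3 a1 b1 0, mu U1 U2 U3 a2 b1 0) \<noteq> (1,0)) \<and>
         ((mu U1 U2 U3 a1 b1 c1, mu U1 U2 U3 a1 b1 c2) \<noteq> (1,1) \<or>
           (mu U1 U2 U3 a1 0 c1, mu U1 U2 U3 a1 0 c2) \<noteq> (1,0)) \<and>
         ((mu U1 U2 U3 a1 b1 c1, mu U1 U2 U3 a1 b2 c1) \<noteq> (1,1) \<or>
           (mu U1 U2 U3 0 b1 c1, mu U1 U2 U3 0 b2 c1) \<noteq> (1,0))
     \<longleftrightarrow> \<not> bad_quadrilateral U1 U2 U3 (HypA a1) (HypA a2) (HypB b1) (HypC c1) \<and>
       \<not> bad_quadrilateral U1 U2 U3 (HypC c1) (HypC c2) (HypA a1) (HypB b1) \<and>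
       \<not> bad_quadrilateral U1 U2 U3 (HypB b1) (HypB b2) (HypC c1) (HypA a1)"
  using assms by (auto simp: mu_eq_of_bool mu_zero_eq_of_bool bad_quadrilateral_def)

theorem proposition3p8:
  fixes d1 d2 d3 :: nat and U1 U2 U3 :: "(nat \<times> nat) set"
  assumes "variety_of_lines d1 d2 d3 U1 U2 U3"
    and "resembles_ferrers U1 d2 d3"
    and "resembles_ferrers U2 d1 d3"
    and "resembles_ferrers U3 d1 d2"
  shows "hyp4_star U1 U2 U3 \<longleftrightarrow>
    (\<forall>a1\<in>{1..d1}. \<forall>a2\<in>{1..d1}. \<forall>b1\<in>{1..d2}. \<forall>b2\<in>{1..d2}. \<forall>c1\<in>{1..d3}. \<forall>c2\<in>{1..d3}.
       ((mu U1 U2 U3 a1 b1 c1, mu U1 U2 U3 a2 b1 c1) \<noteq> (1,1) \<or>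
        (mu U1 U2 U3 a1 b1 0, mu U1 U2 U3 a2 b1 0) \<noteq> (1,0)) \<and>
       ((mu U1 U2 U3 a1 b1 c1, mu U1 U2 U3 a1 b1 c2) \<noteq> (1,1) \<or>
        (mu U1 U2 U3 a1 0 c1, mu U1 U2 U3 a1 0 c2) \<noteq> (1,0)) \<and>
       ((mu U1 U2 U3 a1 b1 c1, mu U1 U2 U3 a1 b2 c1) \<noteq> (1,1) \<or>
        (mu U1 U2 U3 0 b1 c1, mu U1 U2 U3 0 b2 c1) \<noteq> (1,0)))"
proof -
  have U: "U3 \<subseteq> {1..d1} \<times> {1..d2}" "U2 \<subseteq> {1..d1} \<times> {1..d3}" "U1 \<subseteq> {1..d2} \<times> {1..d3}"
    using assms(1) unfolding variety_of_lines_def by blast+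
  have "ferrers_relation U1" "ferrers_relation U2" "ferrers_relation U3"
    using resembles_ferrers_imp_ferrers_relation assms(2-4) U by blast+
  note no_bad_shapes = no_bad_quadrilateral_iff_no_bad_shapes[OF assms(1) this]
  show ?thesis
    unfolding hyp4_star_iff_no_bad_quadrilateral no_bad_shapes
    by (intro ball_cong refl mu_conditions_iff_no_bad_shapes [symmetric]) auto
qed

end
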